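(* Let $G$ be a graph, $e=uv$ an edge, and $w$ a vertex such that $w$ is an isolated vertex of $G-N_G[\{u,v\}]$ (in particular $w\notin N_G[\{u,v\}]$). If $w$ has a neighbour $x$ with $\deg_G(x)=2$, then $\operatorname{reg}(G)=\operatorname{reg}(G-e)$, where $G-e$ is obtained by deleting the edge $e$.
   Context: $N_G[\{u,v\}]=N_G(u)\cup N_G(v)\cup\{u,v\}$. $\operatorname{reg}(G)=\max\{j\ge0:\widetilde H_{j-1}(\operatorname{Ind}(G[S]);\Bbbk)\neq0\text{ for some }S\subseteq V(G)\}$ over a field $\Bbbk$, $\operatorname{Ind}$ the independence complex. *)

theory Defs
  imports Main
begin

definition simple_graph :: "'a set \<Rightarrow> 'a set set \<Rightarrow> bool" where
  "simple_graph V E \<longleftrightarrow> finite V \<and>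
     (\<forall>e\<in>E. \<exists>a b. a \<noteq> b \<and> a \<in> V \<and> b \<in> V \<and> e = {a, b})"

definition nbhd :: "'a set \<Rightarrow> 'a set set \<Rightarrow> 'a \<Rightarrow> 'a set" where
  "nbhd V E x = {y \<in> V. {x, y} \<in> E}"

definition degree :: "'a set \<Rightarrow> 'a set set \<Rightarrow> 'a \<Rightarrow> nat" where
  "degree V E x = card (nbhd V E x)"

definition closed_nbhd_edge :: "'a set \<Rightarrow> 'a set set \<Rightarrow> 'a \<Rightarrow> 'a \<Rightarrow> 'a set" where
  "closed_nbhd_edge V E u v = nbhd V E u \<union> nbhd V E v \<union> {u, v}"

definition induced_edges :: "'a set set \<Rightarrow> 'a set \<Rightarrow> 'a set set" where
  "induced_edges E S = {e \<in> E. e \<subseteq> S}"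

definition ind_complex :: "'a set \<Rightarrow> 'a set set \<Rightarrow> 'a set set" where
  "ind_complex V E = {\<sigma>. \<sigma> \<subseteq> V \<and> (\<forall>e\<in>E. \<not> e \<subseteq> \<sigma>)}"

text \<open>Augmented simplicial chain complex over a field 'k, with vertex set V and
  faces K.  Oriented simplices are ordered by the linear order on vertices.\<close>
definition chains :: "'a set set \<Rightarrow> int \<Rightarrow> ('a set \<Rightarrow> 'k::field) set" where
  "chains K d = {c. \<forall>\<sigma>. c \<sigma> \<noteq> 0 \<longrightarrow> \<sigma> \<in> K \<and> int (card \<sigma>) = d + 1}"

definition orient_sign :: "'a::linorder \<Rightarrow> 'a set \<Rightarrow> 'k::field" where
  "orient_sign v \<sigma> = (-1) ^ card {w \<in> \<sigma>. w < v}"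

text \<open>Boundary: the coefficient of \<tau> in \<partial>c is \<Sum>_{v\<notin>\<tau>} sign(v, \<tau>\<union>{v}) c(\<tau>\<union>{v}),
  i.e. \<partial>[v_0<...<v_d] = \<Sum>_i (-1)^i [v_0,...,v_i hat,...,v_d].\<close>
definition boundary :: "'a::linorder set \<Rightarrow> ('a set \<Rightarrow> 'k::field) \<Rightarrow> 'a set \<Rightarrow> 'k" where
  "boundary V c \<tau> = (\<Sum>v\<in>V - \<tau>. orient_sign v (insert v \<tau>) * c (insert v \<tau>))"

definition reduced_homology_nonzero ::
    "'k::field itself \<Rightarrow> 'a::linorder set \<Rightarrow> 'a set set \<Rightarrow> int \<Rightarrow> bool" where
  "reduced_homology_nonzero _ V K d \<longleftrightarrow>
     (\<exists>z::'a set \<Rightarrow> 'k. z \<in> chains K d \<and> boundary V z = (\<lambda>_. 0) \<and>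
        \<not> (\<exists>b \<in> chains K (d + 1). boundary V b = z))"

text \<open>Castelnuovo--Mumford regularity via Hochster's formula, as in the paper:
  reg(G) = max { j \<ge> 0 : \<tilde>H_{j-1}(Ind(G[S]); k) \<noteq> 0 for some S \<subseteq> V(G) }.\<close>
definition reg :: "'k::field itself \<Rightarrow> 'a::linorder set \<Rightarrow> 'a set set \<Rightarrow> nat" where
  "reg k V E = Max {j::nat. \<exists>S \<subseteq> V.
       reduced_homology_nonzero k S (ind_complex S (induced_edges E S)) (int j - 1)}"

end

theory Submission
  imports Defs "HOL-Library.Function_Algebras"
begin

text \<open>
  By the definition of reg (Hochster's formula) it suffices to show that, in every degree d, some
  induced subgraph of G has an independence complex with nonvanishing d-th reduced homology iff
  some induced subgraph of G - e has. On vertex sets S not containing both u and v the two graphs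
  induce the same complex. If S contains u, v and w, the complex of (G - e)[S] only gains faces
  containing u and v; since every neighbour of w is adjacent to u or v, adding w to such a face
  keeps it independent, and coning these faces off from w shows that the two complexes have the
  same homology. If S contains u and v but not w, the long exact sequence of a complex relative to
  the deletion of a vertex, whose relative term is the suspended link, moves the homology of
  Ind(G[S]) to Ind(G[S + w]) (done), or to Ind(G[S - N(w)]); deleting there the neighbour a of x
  in {u, v} leads to S - N(w) - a (done) or to the link Ind(G[L]), L = S - N(w) - N[a], in one
  degree lower. As x has degree 2, wx is an isolated edge of G[L + x + w], whose complex is the
  suspension of Ind(G[L]); this set avoids a, so we are done again.
\<close>

section \<open>Simplicial chains and the boundary operator\<close>

lemma orient_sign_insert_self: "orient_sign a (insert a \<sigma>) = orient_sign a \<sigma>"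
  unfolding orient_sign_def by (rule arg_cong[where f="\<lambda>n. (-1) ^ card n"]) auto

lemma orient_sign_insert:
  assumes "finite \<sigma>" "b \<notin> \<sigma>" "b \<noteq> a"
  shows "(orient_sign a (insert b \<sigma>) :: 'k::field) = (if b < a then -1 else 1) * orient_sign a \<sigma>"
proof (cases "b < a")
  case True
  then have "{v \<in> insert b \<sigma>. v < a} = insert b {v \<in> \<sigma>. v < a}" by auto
  with True assms show ?thesis unfolding orient_sign_def by simp
next
  case False
  then have "{v \<in> insert b \<sigma>. v < a} = {v \<in> \<sigma>. v < a}" by auto
  with False show ?thesis unfolding orient_sign_def by simp
qed

lemma orient_sign_square [simp]: "(orient_sign a \<sigma> :: 'k::field) * orient_sign a \<sigma> = 1"
  unfolding orient_sign_def by (simp flip: power_mult_distrib)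

lemma orient_sign_nonzero [simp]: "(orient_sign a \<sigma> :: 'k::field) \<noteq> 0"
  unfolding orient_sign_def by simp

definition supported_in :: "'a set \<Rightarrow> ('a set \<Rightarrow> 'k::zero) \<Rightarrow> bool" where
  "supported_in U c \<longleftrightarrow> (\<forall>\<sigma>. c \<sigma> \<noteq> 0 \<longrightarrow> \<sigma> \<subseteq> U)"

lemma supported_in_zero: "supported_in U c \<Longrightarrow> \<not> \<sigma> \<subseteq> U \<Longrightarrow> c \<sigma> = 0"
  unfolding supported_in_def by blast

lemma boundary_eq_sum: "boundary U c \<tau> = (\<Sum>v\<in>U - \<tau>. orient_sign v \<tau> * c (insert v \<tau>))"
  unfolding boundary_def by (simp add: orient_sign_insert_self)

lemma boundary_nonzeroD: "boundary U c \<tau> \<noteq> 0 \<Longrightarrow> \<exists>v\<in>U - \<tau>. c (insert v \<tau>) \<noteq> 0"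
proof (rule ccontr)
  assume "boundary U c \<tau> \<noteq> 0" "\<not> (\<exists>v\<in>U - \<tau>. c (insert v \<tau>) \<noteq> 0)"
  then show False unfolding boundary_def by (simp add: sum.neutral)
qed

lemma boundary_supported: "supported_in U c \<Longrightarrow> supported_in U (boundary U c)"
  unfolding supported_in_def using boundary_nonzeroD by blast

lemma boundary_add: "boundary U (c + c') = boundary U c + boundary U c'"
  unfolding boundary_def by (simp add: fun_eq_iff distrib_left sum.distrib)

lemma boundary_diff: "boundary U (c - c') = boundary U c - boundary U c'"
  unfolding boundary_def by (simp add: fun_eq_iff right_diff_distrib sum_subtractf)

lemma boundary_uminus: "boundary U (- c) = - boundary U c"
  unfolding boundary_def by (simp add: fun_eq_iff sum_negf)

lemma boundary_boundary:
  fixes c :: "'a::linorder set \<Rightarrow> 'k::field"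
  assumes U: "finite U" and c: "supported_in U c"
  shows "boundary U (boundary U c) = 0"
proof
  fix \<tau>
  show "boundary U (boundary U c) \<tau> = 0 \<tau>"
  proof (cases "\<tau> \<subseteq> U")
    case False
    then show ?thesis using supported_in_zero[OF boundary_supported[OF boundary_supported[OF c]]]
      by simp
  next
    case True
    then have "finite \<tau>" using U finite_subset by blast
    define f where
      "f = (\<lambda>(a, b). orient_sign a \<tau> * (orient_sign b (insert a \<tau>) * c (insert b (insert a \<tau>))))"
    define P where "P = {p \<in> (U - \<tau>) \<times> (U - \<tau>). fst p < snd p}"
    \<comment> \<open>the terms indexed by (a, b) and (b, a) cancel, as their signs differ by one transposition\<close>
    have cancel: "f p + f (prod.swap p) = 0" if pP: "p \<in> P" for p
    proof -
      obtain a b where p_eq: "p = (a, b)" and ab: "a \<notin> \<tau>" "b \<notin> \<tau>" "a < b"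
        using pP unfolding P_def by (cases p) auto
      then have "a \<noteq> b" "b \<noteq> a" "\<not> b < a" by auto
      then have "(orient_sign b (insert a \<tau>) :: 'k) = - orient_sign b \<tau>"
        "(orient_sign a (insert b \<tau>) :: 'k) = orient_sign a \<tau>"
        using orient_sign_insert[OF \<open>finite \<tau>\<close> ab(1), of b]
          orient_sign_insert[OF \<open>finite \<tau>\<close> ab(2), of a] ab(3)
        by simp_all
      then show ?thesis unfolding p_eq f_def by (simp add: insert_commute)
    qed
    have "boundary U (boundary U c) \<tau> = (\<Sum>a\<in>U - \<tau>. \<Sum>b\<in>U - \<tau> - {a}. f (a, b))"
      unfolding boundary_eq_sum f_def sum_distrib_left
      by (intro sum.cong refl) (auto simp: Diff_insert[symmetric] insert_commute)
    also have "\<dots> = sum f (SIGMA a:U - \<tau>. U - \<tau> - {a})"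
      using U by (simp add: sum.Sigma)
    also have "(SIGMA a:U - \<tau>. U - \<tau> - {a}) = P \<union> prod.swap ` P"
      unfolding P_def by (auto simp: neq_iff image_iff)
    also have "sum f \<dots> = sum f P + sum (f \<circ> prod.swap) P"
      using U unfolding P_def
      by (subst sum.union_disjoint) (auto simp: sum.reindex inj_on_def)
    also have "\<dots> = 0"
      using cancel by (simp flip: sum.distrib)
    finally show ?thesis by simp
  qed
qed

section \<open>Cone and link operators on chains\<close>

definition cone_chain :: "'a::linorder \<Rightarrow> ('a set \<Rightarrow> 'k::field) \<Rightarrow> 'a set \<Rightarrow> 'k" where
  "cone_chain a c \<rho> = (if a \<in> \<rho> then orient_sign a \<rho> * c (\<rho> - {a}) else 0)"

definition link_chain :: "'a::linorder \<Rightarrow> ('a set \<Rightarrow> 'k::field) \<Rightarrow> 'a set \<Rightarrow> 'k" where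
  "link_chain a c \<sigma> = (if a \<notin> \<sigma> then orient_sign a \<sigma> * c (insert a \<sigma>) else 0)"

lemma cone_chain_supported: "a \<in> U \<Longrightarrow> supported_in U c \<Longrightarrow> supported_in U (cone_chain a c)"
  unfolding supported_in_def cone_chain_def by (auto split: if_splits)

lemma boundary_cone_chain_apex_notin:
  fixes c :: "'a::linorder set \<Rightarrow> 'k::field"
  assumes "finite U" "a \<in> U" "a \<notin> \<tau>"
  shows "boundary U (cone_chain a c) \<tau> = c \<tau>"
proof -
  have "boundary U (cone_chain a c) \<tau> = (\<Sum>b\<in>U - \<tau>. if b = a then c \<tau> else 0)"
    unfolding boundary_eq_sum
    by (intro sum.cong refl)
      (use assms in \<open>auto simp: cone_chain_def orient_sign_insert_self mult.assoc[symmetric]\<close>)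
  then show ?thesis using assms by simp
qed

lemma boundary_cone_chain_apex_in:
  fixes c :: "'a::linorder set \<Rightarrow> 'k::field"
  assumes U: "finite U" "a \<in> U" and \<tau>: "\<tau> \<subseteq> U" "a \<in> \<tau>"
  shows "boundary U (cone_chain a c) \<tau> = c \<tau> - cone_chain a (boundary U c) \<tau>"
proof -
  define \<rho> where "\<rho> = \<tau> - {a}"
  have \<tau>_eq: "\<tau> = insert a \<rho>" "a \<notin> \<rho>" using \<tau> unfolding \<rho>_def by auto
  have "finite \<tau>" "finite \<rho>" using U \<tau> finite_subset unfolding \<rho>_def by auto
  define s where "s = (\<Sum>b\<in>U - \<tau>. orient_sign b \<rho> * c (insert b \<rho>))"
  have "U - \<rho> = insert a (U - \<tau>)" using \<tau>_eq U by auto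
  then have "boundary U c \<rho> = (\<Sum>b\<in>insert a (U - \<tau>). orient_sign b \<rho> * c (insert b \<rho>))"
    unfolding boundary_eq_sum by simp
  also have "\<dots> = orient_sign a \<rho> * c \<tau> + s"
    unfolding s_def using U(1) \<tau>(2) \<tau>_eq(1) by (simp add: sum.insert)
  finally have "boundary U c \<rho> = orient_sign a \<rho> * c \<tau> + s" .
  moreover have "orient_sign a \<tau> = (orient_sign a \<rho> :: 'k)"
    using \<tau>_eq(1) orient_sign_insert_self by metis
  ultimately have cone_boundary: "cone_chain a (boundary U c) \<tau> = c \<tau> + orient_sign a \<tau> * s"
    unfolding cone_chain_def \<rho>_def using \<tau>(2) by (simp add: distrib_left mult.assoc[symmetric])
  have "boundary U (cone_chain a c) \<tau> = - (orient_sign a \<tau> * s)"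
    unfolding boundary_eq_sum s_def sum_distrib_left sum_negf[symmetric]
  proof (rule sum.cong[OF refl])
    fix b assume b: "b \<in> U - \<tau>"
    then have "b \<noteq> a" "b \<notin> \<rho>" using \<tau>_eq by auto
    have "insert b \<tau> - {a} = insert b \<rho>" using \<tau>_eq b by auto
    moreover have "(orient_sign a (insert b \<tau>) :: 'k) = (if b < a then -1 else 1) * orient_sign a \<tau>"
      using orient_sign_insert[OF \<open>finite \<tau>\<close>, of b a] b \<open>b \<noteq> a\<close> by simp
    moreover have "(orient_sign b \<tau> :: 'k) = (if a < b then -1 else 1) * orient_sign b \<rho>"
      using orient_sign_insert[OF \<open>finite \<rho>\<close> \<tau>_eq(2), of b] \<tau>_eq(1) \<open>b \<noteq> a\<close> by simp
    ultimately show "orient_sign b \<tau> * cone_chain a c (insert b \<tau>) =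
        - (orient_sign a \<tau> * (orient_sign b \<rho> * c (insert b \<rho>)))"
      using \<open>b \<noteq> a\<close> \<tau> unfolding cone_chain_def by (cases a b rule: linorder_cases) auto
  qed
  with cone_boundary show ?thesis by simp
qed

lemma boundary_cone_chain:
  fixes c :: "'a::linorder set \<Rightarrow> 'k::field"
  assumes U: "finite U" "a \<in> U" and c: "supported_in U c"
  shows "boundary U (cone_chain a c) = c - cone_chain a (boundary U c)"
proof
  fix \<tau>
  consider "\<not> \<tau> \<subseteq> U" | "\<tau> \<subseteq> U" "a \<notin> \<tau>" | "\<tau> \<subseteq> U" "a \<in> \<tau>" by blast
  then show "boundary U (cone_chain a c) \<tau> = (c - cone_chain a (boundary U c)) \<tau>"
  proof cases
    case 1
    then have "\<not> \<tau> - {a} \<subseteq> U" using U by blast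
    with 1 show ?thesis
      using supported_in_zero[OF boundary_supported[OF cone_chain_supported[OF U(2) c]]]
        supported_in_zero[OF c] supported_in_zero[OF boundary_supported[OF c]]
      by (simp add: cone_chain_def)
  qed (simp_all add: boundary_cone_chain_apex_notin boundary_cone_chain_apex_in U cone_chain_def)
qed

lemma link_chain_boundary:
  fixes c :: "'a::linorder set \<Rightarrow> 'k::field"
  assumes U: "finite U" and c: "supported_in U c"
  shows "link_chain a (boundary U c) = - boundary U (link_chain a c)"
proof
  fix \<sigma>
  consider "a \<in> \<sigma>" | "a \<notin> \<sigma>" "\<not> \<sigma> \<subseteq> U" | "a \<notin> \<sigma>" "\<sigma> \<subseteq> U" by blast
  then show "link_chain a (boundary U c) \<sigma> = (- boundary U (link_chain a c)) \<sigma>"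
  proof cases
    case 1
    then show ?thesis unfolding link_chain_def boundary_eq_sum by simp
  next
    case 2
    have "supported_in U (link_chain a c)"
      using c unfolding supported_in_def link_chain_def by auto
    then have "boundary U (link_chain a c) \<sigma> = 0"
      using 2 supported_in_zero boundary_supported by blast
    moreover have "boundary U c (insert a \<sigma>) = 0"
      using 2 supported_in_zero[OF boundary_supported[OF c]] by blast
    ultimately show ?thesis unfolding link_chain_def by simp
  next
    case 3
    then have "finite \<sigma>" using U finite_subset by blast
    have "boundary U (link_chain a c) \<sigma> =
        (\<Sum>b\<in>U - insert a \<sigma>. orient_sign b \<sigma> * link_chain a c (insert b \<sigma>))"
      unfolding boundary_eq_sum
      by (rule sum.mono_neutral_cong_right) (use U in \<open>auto simp: link_chain_def\<close>)
    moreover have "link_chain a (boundary U c) \<sigma> =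
        (\<Sum>b\<in>U - insert a \<sigma>.
           orient_sign a \<sigma> * (orient_sign b (insert a \<sigma>) * c (insert b (insert a \<sigma>))))"
      unfolding link_chain_def boundary_eq_sum using 3 by (simp add: sum_distrib_left)
    moreover have "orient_sign a \<sigma> * (orient_sign b (insert a \<sigma>) * c (insert b (insert a \<sigma>))) =
        - (orient_sign b \<sigma> * link_chain a c (insert b \<sigma>))" if b: "b \<in> U - insert a \<sigma>" for b
    proof -
      have "(orient_sign a (insert b \<sigma>) :: 'k) = (if b < a then -1 else 1) * orient_sign a \<sigma>"
        "(orient_sign b (insert a \<sigma>) :: 'k) = (if a < b then -1 else 1) * orient_sign b \<sigma>"
        using orient_sign_insert[OF \<open>finite \<sigma>\<close>, where 'k='k] b 3 by auto
      then show ?thesis using b 3 unfolding link_chain_def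
        by (cases a b rule: linorder_cases) (auto simp: insert_commute)
    qed
    ultimately show ?thesis by (simp add: sum_negf[symmetric])
  qed
qed

lemma cone_chain_zero [simp]: "cone_chain a 0 = 0"
  unfolding cone_chain_def by (simp add: fun_eq_iff)

lemma link_chain_cone_chain: "(\<And>\<sigma>. a \<in> \<sigma> \<Longrightarrow> c \<sigma> = 0) \<Longrightarrow> link_chain a (cone_chain a c) = c"
  unfolding link_chain_def cone_chain_def
  by (auto simp: fun_eq_iff orient_sign_insert_self mult.assoc[symmetric])

lemma link_chain_zero [simp]: "link_chain a 0 = 0"
  unfolding link_chain_def by (simp add: fun_eq_iff)

lemma link_chain_add: "link_chain a (c + c') = link_chain a c + link_chain a c'"
  unfolding link_chain_def by (auto simp: fun_eq_iff distrib_left)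

lemma link_chain_diff: "link_chain a (c - c') = link_chain a c - link_chain a c'"
  unfolding link_chain_def by (auto simp: fun_eq_iff right_diff_distrib)

lemma link_chain_eq_0_iff: "link_chain a c = 0 \<longleftrightarrow> (\<forall>\<sigma>. a \<in> \<sigma> \<longrightarrow> c \<sigma> = 0)"
proof
  assume c: "link_chain a c = 0"
  show "\<forall>\<sigma>. a \<in> \<sigma> \<longrightarrow> c \<sigma> = 0"
  proof (intro allI impI)
    fix \<sigma> assume "a \<in> \<sigma>"
    then have "link_chain a c (\<sigma> - {a}) = orient_sign a (\<sigma> - {a}) * c \<sigma>"
      unfolding link_chain_def by (simp add: insert_absorb)
    then show "c \<sigma> = 0" using c by simp
  qed
qed (auto simp: link_chain_def fun_eq_iff)

section \<open>Deletion and link of a vertex\<close>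

definition down_closed :: "'a set set \<Rightarrow> bool" where
  "down_closed K \<longleftrightarrow> (\<forall>\<sigma>\<in>K. \<forall>v\<in>\<sigma>. \<sigma> - {v} \<in> K)"

definition deletion :: "'a set set \<Rightarrow> 'a \<Rightarrow> 'a set set" where
  "deletion K a = {\<sigma> \<in> K. a \<notin> \<sigma>}"

definition link :: "'a set set \<Rightarrow> 'a \<Rightarrow> 'a set set" where
  "link K a = {\<sigma>. a \<notin> \<sigma> \<and> insert a \<sigma> \<in> K}"

lemma deletion_subset: "deletion K a \<subseteq> K"
  unfolding deletion_def by blast

lemma link_subset_deletion: "down_closed K \<Longrightarrow> link K a \<subseteq> deletion K a"
  unfolding down_closed_def link_def deletion_def by (force dest: bspec[where x=a])

lemma link_subset_Pow: "K \<subseteq> Pow U \<Longrightarrow> link K a \<subseteq> Pow U"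
  unfolding link_def by blast

lemma chains_supported: "K \<subseteq> Pow U \<Longrightarrow> c \<in> chains K d \<Longrightarrow> supported_in U c"
  unfolding chains_def supported_in_def by blast

lemma chains_mono: "K \<subseteq> K' \<Longrightarrow> c \<in> chains K d \<Longrightarrow> c \<in> chains K' d"
  unfolding chains_def by blast

lemma chains_add:
  assumes "c \<in> chains K d" "c' \<in> chains K d"
  shows "c + c' \<in> chains K d"
proof -
  have "c \<sigma> + c' \<sigma> \<noteq> 0 \<Longrightarrow> c \<sigma> \<noteq> 0 \<or> c' \<sigma> \<noteq> 0" for \<sigma> by auto
  with assms show ?thesis unfolding chains_def by auto
qed

lemma chains_uminus: "c \<in> chains K d \<Longrightarrow> - c \<in> chains K d"
  unfolding chains_def by simp

lemma chains_diff: "c \<in> chains K d \<Longrightarrow> c' \<in> chains K d \<Longrightarrow> c - c' \<in> chains K d"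
  using chains_add[OF _ chains_uminus] by (metis diff_conv_add_uminus)

lemma boundary_in_chains:
  assumes U: "finite U" "K \<subseteq> Pow U" and K: "down_closed K" and c: "c \<in> chains K (d + 1)"
  shows "boundary U c \<in> chains K d"
  unfolding chains_def mem_Collect_eq
proof (intro allI impI)
  fix \<tau> assume "boundary U c \<tau> \<noteq> 0"
  then obtain v where v: "v \<in> U - \<tau>" "c (insert v \<tau>) \<noteq> 0" using boundary_nonzeroD by blast
  then have "insert v \<tau> \<in> K" "int (card (insert v \<tau>)) = d + 2"
    using c unfolding chains_def by auto
  moreover have "finite \<tau>"
    using U \<open>insert v \<tau> \<in> K\<close> by (meson PowD finite_subset subsetD subset_insertI)
  then have "card (insert v \<tau>) = card \<tau> + 1" using v by simp
  moreover have "insert v \<tau> - {v} \<in> K" using K \<open>insert v \<tau> \<in> K\<close> unfolding down_closed_def by blast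
  moreover have "insert v \<tau> - {v} = \<tau>" using v by auto
  ultimately show "\<tau> \<in> K \<and> int (card \<tau>) = d + 1" by simp
qed

lemma cone_chain_in_chains:
  assumes U: "finite U" "K \<subseteq> Pow U" and c: "c \<in> chains K d"
    and cone: "\<And>\<sigma>. c \<sigma> \<noteq> 0 \<Longrightarrow> a \<notin> \<sigma> \<Longrightarrow> insert a \<sigma> \<in> K'"
  shows "cone_chain a c \<in> chains K' (d + 1)"
  unfolding chains_def mem_Collect_eq
proof (intro allI impI)
  fix \<rho> assume "cone_chain a c \<rho> \<noteq> 0"
  then have \<rho>: "a \<in> \<rho>" "c (\<rho> - {a}) \<noteq> 0" unfolding cone_chain_def by (auto split: if_splits)
  then have "\<rho> - {a} \<in> K" "int (card (\<rho> - {a})) = d + 1" using c unfolding chains_def by auto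
  moreover have \<rho>_eq: "insert a (\<rho> - {a}) = \<rho>" using \<rho> by auto
  moreover have "finite (\<rho> - {a})" using U \<open>\<rho> - {a} \<in> K\<close> by (meson PowD finite_subset subsetD)
  then have "card \<rho> = card (\<rho> - {a}) + 1" using card_insert_disjoint[of "\<rho> - {a}" a] \<rho>_eq by simp
  ultimately show "\<rho> \<in> K' \<and> int (card \<rho>) = d + 1 + 1" using cone[OF \<rho>(2)] by auto
qed

lemma cone_chain_link_in_chains:
  "finite U \<Longrightarrow> K \<subseteq> Pow U \<Longrightarrow> c \<in> chains (link K a) d \<Longrightarrow> cone_chain a c \<in> chains K (d + 1)"
  by (rule cone_chain_in_chains[OF _ link_subset_Pow]) (auto simp: link_def chains_def)

lemma link_chain_in_chains:
  assumes U: "finite U" "K \<subseteq> Pow U" and c: "c \<in> chains K d"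
  shows "link_chain a c \<in> chains (link K a) (d - 1)"
  unfolding chains_def mem_Collect_eq
proof (intro allI impI)
  fix \<sigma> assume "link_chain a c \<sigma> \<noteq> 0"
  then have "a \<notin> \<sigma>" "c (insert a \<sigma>) \<noteq> 0" unfolding link_chain_def by (auto split: if_splits)
  moreover from this have "insert a \<sigma> \<in> K" "int (card (insert a \<sigma>)) = d + 1"
    using c unfolding chains_def by auto
  moreover from this have "finite \<sigma>" using U by (meson PowD finite_subset subsetD subset_insertI)
  ultimately show "\<sigma> \<in> link K a \<and> int (card \<sigma>) = d - 1 + 1" unfolding link_def by simp
qed

lemma link_chain_deletion_chain: "c \<in> chains (deletion K a) d \<Longrightarrow> link_chain a c = 0"
  unfolding link_chain_eq_0_iff chains_def deletion_def by blast

lemma deletion_chainsI: "c \<in> chains K d \<Longrightarrow> link_chain a c = 0 \<Longrightarrow> c \<in> chains (deletion K a) d"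
  unfolding link_chain_eq_0_iff chains_def deletion_def by blast

lemma reduced_homology_nonzero_iff:
  "reduced_homology_nonzero (k :: 'k::field itself) U K d \<longleftrightarrow>
     (\<exists>z :: 'a::linorder set \<Rightarrow> 'k. z \<in> chains K d \<and> boundary U z = 0 \<and>
        (\<forall>b \<in> chains K (d + 1). boundary U b \<noteq> z))"
  unfolding reduced_homology_nonzero_def zero_fun_def by blast

lemma add_boundary_cone_in_deletion:
  fixes c :: "'a::linorder set \<Rightarrow> 'k::field"
  assumes U: "finite U" "K \<subseteq> Pow U" and K: "down_closed K"
    and c: "c \<in> chains K d" and y: "y \<in> chains (link K a) d" "boundary U y = link_chain a c"
  shows "c + boundary U (cone_chain a y) \<in> chains (deletion K a) d"
proof (rule deletion_chainsI)
  have cone: "cone_chain a y \<in> chains K (d + 1)"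
    using cone_chain_link_in_chains[OF U(1,2) y(1)] .
  then show "c + boundary U (cone_chain a y) \<in> chains K d"
    by (intro chains_add c boundary_in_chains[OF U(1,2) K])
  have "\<And>\<sigma>. a \<in> \<sigma> \<Longrightarrow> y \<sigma> = 0" using y(1) unfolding chains_def link_def by blast
  then have "link_chain a (boundary U (cone_chain a y)) = - link_chain a c"
    using link_chain_boundary[OF U(1) chains_supported[OF U(2) cone]] y(2)
    by (simp add: link_chain_cone_chain)
  then show "link_chain a (c + boundary U (cone_chain a y)) = 0"
    by (simp add: link_chain_add)
qed

lemma homology_complex_imp_deletion_or_link:
  fixes k :: "'k::field itself" and K :: "'a::linorder set set"
  assumes U: "finite U" "K \<subseteq> Pow U" and K: "down_closed K"
    and "reduced_homology_nonzero k U K d"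
  shows "reduced_homology_nonzero k U (deletion K a) d \<or>
    reduced_homology_nonzero k U (link K a) (d - 1)"
proof -
  obtain z :: "'a set \<Rightarrow> 'k" where z: "z \<in> chains K d" "boundary U z = 0"
    and z_nb: "\<And>b. b \<in> chains K (d + 1) \<Longrightarrow> boundary U b \<noteq> z"
    using assms(4) unfolding reduced_homology_nonzero_iff by blast
  define y where "y = link_chain a z"
  have y: "y \<in> chains (link K a) (d - 1)" "boundary U y = 0"
    using link_chain_in_chains[OF U(1,2) z(1)]
      link_chain_boundary[OF U(1) chains_supported[OF U(2) z(1)]] z(2)
    unfolding y_def by (simp_all add: neg_equal_0_iff_equal)
  show ?thesis
  proof (cases "\<exists>y' \<in> chains (link K a) d. boundary U y' = y")
    case False
    then show ?thesis using y unfolding reduced_homology_nonzero_iff by auto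
  next
    case True
    then obtain y' where y': "y' \<in> chains (link K a) d" "boundary U y' = link_chain a z"
      unfolding y_def by blast
    have cone: "cone_chain a y' \<in> chains K (d + 1)"
      using cone_chain_link_in_chains[OF U(1,2) y'(1)] .
    define z' where "z' = z + boundary U (cone_chain a y')"
    have "z' \<in> chains (deletion K a) d"
      unfolding z'_def using add_boundary_cone_in_deletion[OF U K z(1) y'] .
    moreover have "boundary U z' = 0"
      unfolding z'_def boundary_add z(2)
      using boundary_boundary[OF U(1) chains_supported[OF U(2) cone]] by simp
    moreover have "boundary U b \<noteq> z'" if "b \<in> chains (deletion K a) (d + 1)" for b
    proof
      assume "boundary U b = z'"
      then have "boundary U (b - cone_chain a y') = z" unfolding z'_def boundary_diff by simp
      moreover have "b - cone_chain a y' \<in> chains K (d + 1)"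
        using chains_diff[OF chains_mono[OF deletion_subset that] cone] .
      ultimately show False using z_nb by blast
    qed
    ultimately show ?thesis unfolding reduced_homology_nonzero_iff by blast
  qed
qed

lemma homology_deletion_imp_complex_or_link:
  fixes k :: "'k::field itself" and K :: "'a::linorder set set"
  assumes U: "finite U" "K \<subseteq> Pow U" and K: "down_closed K"
    and "reduced_homology_nonzero k U (deletion K a) d"
  shows "reduced_homology_nonzero k U K d \<or> reduced_homology_nonzero k U (link K a) d"
proof -
  obtain z :: "'a set \<Rightarrow> 'k" where z: "z \<in> chains (deletion K a) d" "boundary U z = 0"
    and z_nb: "\<And>b. b \<in> chains (deletion K a) (d + 1) \<Longrightarrow> boundary U b \<noteq> z"
    using assms(4) unfolding reduced_homology_nonzero_iff by blast
  have zK: "z \<in> chains K d" using chains_mono[OF deletion_subset z(1)] .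
  show ?thesis
  proof (cases "\<exists>b \<in> chains K (d + 1). boundary U b = z")
    case False
    then show ?thesis using zK z(2) unfolding reduced_homology_nonzero_iff by blast
  next
    case True
    then obtain b where b: "b \<in> chains K (d + 1)" "boundary U b = z" by blast
    define y where "y = link_chain a b"
    have y: "y \<in> chains (link K a) d"
      using link_chain_in_chains[OF U(1,2) b(1)] unfolding y_def by simp
    have "boundary U y = 0"
      using link_chain_boundary[OF U(1) chains_supported[OF U(2) b(1)]] b(2)
        link_chain_deletion_chain[OF z(1)] unfolding y_def by (simp add: neg_equal_0_iff_equal)
    moreover have "boundary U c \<noteq> y" if "c \<in> chains (link K a) (d + 1)" for c
    proof
      assume "boundary U c = y"
      then have "b + boundary U (cone_chain a c) \<in> chains (deletion K a) (d + 1)"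
        using add_boundary_cone_in_deletion[OF U K b(1) that] unfolding y_def by blast
      moreover have "boundary U (b + boundary U (cone_chain a c)) = z"
        using boundary_boundary[OF U(1)
            chains_supported[OF U(2) cone_chain_link_in_chains[OF U(1,2) that]]]
        unfolding boundary_add b(2) by simp
      ultimately show False using z_nb by blast
    qed
    ultimately show ?thesis using y unfolding reduced_homology_nonzero_iff by blast
  qed
qed

lemma homology_link_imp_complex_or_deletion:
  fixes k :: "'k::field itself" and K :: "'a::linorder set set"
  assumes U: "finite U" "K \<subseteq> Pow U" "a \<in> U" and K: "down_closed K"
    and "reduced_homology_nonzero k U (link K a) d"
  shows "reduced_homology_nonzero k U K (d + 1) \<or> reduced_homology_nonzero k U (deletion K a) d"
proof -
  obtain y :: "'a set \<Rightarrow> 'k" where y: "y \<in> chains (link K a) d" "boundary U y = 0"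
    and y_nb: "\<And>c. c \<in> chains (link K a) (d + 1) \<Longrightarrow> boundary U c \<noteq> y"
    using assms(5) unfolding reduced_homology_nonzero_iff by blast
  show ?thesis
  proof (cases "\<exists>b \<in> chains (deletion K a) (d + 1). boundary U b = y")
    case False
    then show ?thesis using chains_mono[OF link_subset_deletion[OF K] y(1)] y(2)
      unfolding reduced_homology_nonzero_iff by blast
  next
    case True
    then obtain b where b: "b \<in> chains (deletion K a) (d + 1)" "boundary U b = y" by blast
    have y_a: "\<And>\<sigma>. a \<in> \<sigma> \<Longrightarrow> y \<sigma> = 0" using y(1) unfolding chains_def link_def by blast
    \<comment> \<open>the suspension of y: the cone over y capped off by a chain of the deletion\<close>
    define z where "z = cone_chain a y - b"
    have "z \<in> chains K (d + 1)" unfolding z_def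
      using chains_diff[OF cone_chain_link_in_chains[OF U(1,2) y(1)]
          chains_mono[OF deletion_subset b(1)]] .
    moreover have "boundary U z = 0"
      using boundary_cone_chain[OF U(1,3) chains_supported[OF link_subset_Pow[OF U(2)] y(1)]]
        y(2) b(2)
      unfolding z_def boundary_diff by (simp add: cone_chain_def fun_eq_iff)
    moreover have "link_chain a z = y"
      using link_chain_cone_chain[OF y_a] link_chain_deletion_chain[OF b(1)]
      unfolding z_def link_chain_diff by simp
    moreover have "boundary U c \<noteq> z" if "c \<in> chains K (d + 1 + 1)" for c
    proof
      assume "boundary U c = z"
      then have "boundary U (- link_chain a c) = link_chain a z"
        using link_chain_boundary[OF U(1) chains_supported[OF U(2) that]]
        by (simp add: boundary_uminus)
      moreover have "- link_chain a c \<in> chains (link K a) (d + 1)"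
        using chains_uminus[OF link_chain_in_chains[OF U(1,2) that]] by (simp add: add.commute)
      ultimately show False using y_nb \<open>link_chain a z = y\<close> by blast
    qed
    ultimately show ?thesis unfolding reduced_homology_nonzero_iff by blast
  qed
qed

lemma cone_homology_vanishes:
  fixes k :: "'k::field itself" and K :: "'a::linorder set set"
  assumes U: "finite U" "K \<subseteq> Pow U" "a \<in> U" and cone: "\<And>\<sigma>. \<sigma> \<in> K \<Longrightarrow> insert a \<sigma> \<in> K"
  shows "\<not> reduced_homology_nonzero k U K d"
proof
  assume "reduced_homology_nonzero k U K d"
  then obtain z :: "'a set \<Rightarrow> 'k" where z: "z \<in> chains K d" "boundary U z = 0"
    and z_nb: "\<And>b. b \<in> chains K (d + 1) \<Longrightarrow> boundary U b \<noteq> z"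
    unfolding reduced_homology_nonzero_iff by blast
  have "cone_chain a z \<in> chains K (d + 1)"
    using cone_chain_in_chains[OF U(1,2) z(1)] cone z(1) unfolding chains_def by blast
  moreover have "boundary U (cone_chain a z) = z"
    using boundary_cone_chain[OF U(1,3) chains_supported[OF U(2) z(1)]] z(2)
    by (simp add: cone_chain_def fun_eq_iff)
  ultimately show False using z_nb by blast
qed

section \<open>Extending a complex by faces coned off from a vertex\<close>

definition restrict_chain :: "'a set set \<Rightarrow> ('a set \<Rightarrow> 'k::zero) \<Rightarrow> 'a set \<Rightarrow> 'k" where
  "restrict_chain K c \<sigma> = (if \<sigma> \<in> K then c \<sigma> else 0)"

lemma restrict_chain_in_chains: "c \<in> chains K' d \<Longrightarrow> restrict_chain K c \<in> chains (K' \<inter> K) d"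
  unfolding chains_def restrict_chain_def by auto

lemma diff_restrict_chain_in_chains:
  "c \<in> chains K' d \<Longrightarrow> c - restrict_chain K c \<in> chains (K' - K) d"
  unfolding chains_def restrict_chain_def by auto

lemma boundary_cone_chain_boundary:
  fixes c :: "'a::linorder set \<Rightarrow> 'k::field"
  assumes "finite U" "a \<in> U" "supported_in U c"
  shows "boundary U (cone_chain a (boundary U c)) = boundary U c"
  using boundary_cone_chain[OF assms(1,2) boundary_supported[OF assms(3)]]
    boundary_boundary[OF assms(1,3)] by simp

context
  fixes U :: "'a::linorder set" and K K' :: "'a set set" and w :: 'a
  assumes U: "finite U" "K' \<subseteq> Pow U" "w \<in> U" and KK': "K \<subseteq> K'" and K: "down_closed K"
    and cone_new: "\<And>\<sigma>. \<sigma> \<in> K' - K \<Longrightarrow> insert w \<sigma> \<in> K'"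
    and cone_old: "\<And>\<tau> \<sigma>. \<tau> \<in> K \<Longrightarrow> \<sigma> \<in> K' - K \<Longrightarrow> \<tau> \<subseteq> \<sigma> \<Longrightarrow> insert w \<tau> \<in> K"
begin

lemma cone_extension_subset_Pow: "K \<subseteq> Pow U" "K' - K \<subseteq> Pow U"
  using KK' U(2) by blast+

lemma cone_chain_boundary_in_chains:
  fixes c :: "'a set \<Rightarrow> 'k::field"
  assumes c: "c \<in> chains (K' - K) (e + 1)" and bc: "boundary U c \<in> chains K e"
  shows "cone_chain w (boundary U c) \<in> chains K (e + 1)"
proof (rule cone_chain_in_chains[OF U(1) cone_extension_subset_Pow(1) bc])
  fix \<tau> assume "boundary U c \<tau> \<noteq> 0"
  then obtain v where "c (insert v \<tau>) \<noteq> 0" using boundary_nonzeroD by blast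
  then have "insert v \<tau> \<in> K' - K" using c unfolding chains_def by blast
  moreover have "\<tau> \<in> K" using bc \<open>boundary U c \<tau> \<noteq> 0\<close> unfolding chains_def by blast
  ultimately show "insert w \<tau> \<in> K" using cone_old by blast
qed

lemma homology_subcomplex_imp_extension:
  assumes "reduced_homology_nonzero (k :: 'k::field itself) U K d"
  shows "reduced_homology_nonzero k U K' d"
proof -
  obtain z :: "'a set \<Rightarrow> 'k" where z: "z \<in> chains K d" "boundary U z = 0"
    and z_nb: "\<And>b. b \<in> chains K (d + 1) \<Longrightarrow> boundary U b \<noteq> z"
    using assms unfolding reduced_homology_nonzero_iff by blast
  have "boundary U b \<noteq> z" if b: "b \<in> chains K' (d + 1)" for b
  proof
    assume bz: "boundary U b = z"
    define bK where "bK = restrict_chain K b"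
    define bN where "bN = b - bK"
    have bK: "bK \<in> chains K (d + 1)"
      using restrict_chain_in_chains[OF b, of K] unfolding bK_def Int_absorb1[OF KK'] .
    have bN: "bN \<in> chains (K' - K) (d + 1)"
      using diff_restrict_chain_in_chains[OF b] unfolding bN_def bK_def .
    have "boundary U bN = z - boundary U bK"
      unfolding bN_def boundary_diff bz ..
    then have "boundary U bN \<in> chains K d"
      using chains_diff[OF z(1) boundary_in_chains[OF U(1) cone_extension_subset_Pow(1) K bK]]
        by simp
    \<comment> \<open>coning off the part of b outside K from w moves b into K without changing its boundary\<close>
    then have "bK + cone_chain w (boundary U bN) \<in> chains K (d + 1)"
      by (intro chains_add bK cone_chain_boundary_in_chains bN)
    moreover have "boundary U (bK + cone_chain w (boundary U bN)) = z"
      using boundary_cone_chain_boundary[OF U(1,3)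
          chains_supported[OF cone_extension_subset_Pow(2) bN]] bz
      unfolding boundary_add bN_def boundary_diff by simp
    ultimately show False using z_nb by blast
  qed
  then show ?thesis
    using chains_mono[OF KK' z(1)] z(2) unfolding reduced_homology_nonzero_iff by blast
qed

lemma homology_extension_imp_subcomplex:
  assumes "reduced_homology_nonzero (k :: 'k::field itself) U K' d"
  shows "reduced_homology_nonzero k U K d"
proof -
  obtain z :: "'a set \<Rightarrow> 'k" where z: "z \<in> chains K' d" "boundary U z = 0"
    and z_nb: "\<And>b. b \<in> chains K' (d + 1) \<Longrightarrow> boundary U b \<noteq> z"
    using assms unfolding reduced_homology_nonzero_iff by blast
  define zK where "zK = restrict_chain K z"
  define zN where "zN = z - zK"
  have zK: "zK \<in> chains K d"
    using restrict_chain_in_chains[OF z(1), of K] unfolding zK_def Int_absorb1[OF KK'] .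
  have zN: "zN \<in> chains (K' - K) d"
    using diff_restrict_chain_in_chains[OF z(1)] unfolding zN_def zK_def by simp
  have zN_supp: "supported_in U zN" using chains_supported[OF cone_extension_subset_Pow(2) zN] .
  have "boundary U zN = - boundary U zK"
    unfolding zN_def boundary_diff z(2) by simp
  then have "boundary U zN \<in> chains K (d - 1)"
    using chains_uminus[OF boundary_in_chains[OF U(1) cone_extension_subset_Pow(1) K, of zK "d - 1"]] zK
    by simp
  \<comment> \<open>z is homologous in K' to a cycle of K: cone off its part outside K from w\<close>
  then have "cone_chain w (boundary U zN) \<in> chains K d"
    using cone_chain_boundary_in_chains[of zN "d - 1"] zN by simp
  then have z': "zK + cone_chain w (boundary U zN) \<in> chains K d"
    using chains_add[OF zK] by blast
  have z'_eq: "zK + cone_chain w (boundary U zN) = z - boundary U (cone_chain w zN)"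
    unfolding boundary_cone_chain[OF U(1,3) zN_supp] by (simp add: zN_def)
  have "cone_chain w zN \<in> chains K' (d + 1)"
  proof (rule cone_chain_in_chains[OF U(1) cone_extension_subset_Pow(2) zN])
    fix \<sigma> assume "zN \<sigma> \<noteq> 0"
    then have "\<sigma> \<in> K' - K" using zN unfolding chains_def by blast
    then show "insert w \<sigma> \<in> K'" by (rule cone_new)
  qed
  then have "boundary U b \<noteq> zK + cone_chain w (boundary U zN)" if "b \<in> chains K (d + 1)" for b
    using z_nb[OF chains_add[OF chains_mono[OF KK' that]]] unfolding z'_eq boundary_add by fastforce
  moreover have "boundary U (zK + cone_chain w (boundary U zN)) = 0"
    unfolding z'_eq boundary_diff z(2)
    using boundary_boundary[OF U(1) cone_chain_supported[OF U(3) zN_supp]] by simp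
  ultimately show ?thesis
    using z' unfolding reduced_homology_nonzero_iff by blast
qed

lemma homology_cone_extension_iff:
  "reduced_homology_nonzero (k :: 'k::field itself) U K d \<longleftrightarrow> reduced_homology_nonzero k U K' d"
  using homology_subcomplex_imp_extension homology_extension_imp_subcomplex by blast

end

section \<open>Independence complexes of induced subgraphs\<close>

lemma boundary_ambient_cong:
  assumes "supported_in S c" "S \<subseteq> U" "finite U"
  shows "boundary S c = boundary U c"
proof
  fix \<tau>
  show "boundary S c \<tau> = boundary U c \<tau>"
  proof (cases "\<tau> \<subseteq> S")
    case True
    then show ?thesis unfolding boundary_def
      by (intro sum.mono_neutral_left) (use assms in \<open>auto simp: supported_in_def\<close>)
  next
    case False
    then have "boundary S c \<tau> = 0" "boundary U c \<tau> = 0" unfolding boundary_def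
      by (intro sum.neutral ballI; use assms in \<open>auto simp: supported_in_def\<close>)+
    then show ?thesis by simp
  qed
qed

lemma reduced_homology_nonzero_ambient_cong:
  assumes "K \<subseteq> Pow S" "S \<subseteq> U" "finite U"
  shows "reduced_homology_nonzero k S K d \<longleftrightarrow> reduced_homology_nonzero k U K d"
proof -
  have "\<And>c d. c \<in> chains K d \<Longrightarrow> boundary S c = boundary U c"
    using boundary_ambient_cong chains_supported assms by blast
  then show ?thesis unfolding reduced_homology_nonzero_def by metis
qed

definition induced_ind_complex :: "'a set set \<Rightarrow> 'a set \<Rightarrow> 'a set set" where
  "induced_ind_complex F S = ind_complex S (induced_edges F S)"

lemma mem_induced_ind_complex: "\<sigma> \<in> induced_ind_complex F S \<longleftrightarrow> \<sigma> \<subseteq> S \<and> (\<forall>e\<in>F. \<not> e \<subseteq> \<sigma>)"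
  unfolding induced_ind_complex_def ind_complex_def induced_edges_def by blast

lemma induced_ind_complex_subset_Pow:
  assumes "S \<subseteq> U"
  shows "induced_ind_complex F S \<subseteq> Pow U"
proof
  fix \<sigma> assume "\<sigma> \<in> induced_ind_complex F S"
  then have "\<sigma> \<subseteq> S" by (simp add: mem_induced_ind_complex)
  with assms show "\<sigma> \<in> Pow U" by simp
qed

lemma down_closed_induced_ind_complex: "down_closed (induced_ind_complex F S)"
  unfolding down_closed_def by (auto simp: mem_induced_ind_complex) (meson Diff_subset subset_trans)

lemma deletion_induced_ind_complex:
  "deletion (induced_ind_complex F S) a = induced_ind_complex F (S - {a})"
  by (auto simp: deletion_def mem_induced_ind_complex)

lemma simple_graph_edgeE:
  assumes "simple_graph V F" "e \<in> F"
  obtains p q where "p \<noteq> q" "p \<in> V" "q \<in> V" "e = {p, q}"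
  using assms unfolding simple_graph_def by blast

lemma edge_subset_insertE:
  assumes F: "simple_graph V F" and e: "e \<in> F" "e \<subseteq> insert a \<sigma>" "\<not> e \<subseteq> \<sigma>"
  obtains y where "y \<in> V" "y \<in> \<sigma>" "y \<noteq> a" "e = {a, y}"
proof -
  obtain p q where pq: "p \<noteq> q" "p \<in> V" "q \<in> V" "e = {p, q}"
    using simple_graph_edgeE[OF F e(1)] by metis
  then obtain y where y: "y \<in> e" "y \<noteq> a" "y \<in> V" by (cases "p = a") auto
  have "a \<in> e" using e(2,3) subset_insert by metis
  then have "e = {a, y}" using pq y by blast
  moreover have "y \<in> \<sigma>" using e(2) y by blast
  ultimately show ?thesis using that y by blast
qed

lemma link_induced_ind_complex:
  assumes F: "simple_graph V F" and "S \<subseteq> V" "a \<in> S"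
  shows "link (induced_ind_complex F S) a = induced_ind_complex F (S - insert a (nbhd V F a))"
proof (intro set_eqI iffI)
  fix \<sigma> assume "\<sigma> \<in> link (induced_ind_complex F S) a"
  then have \<sigma>: "a \<notin> \<sigma>" "insert a \<sigma> \<subseteq> S" "\<forall>e\<in>F. \<not> e \<subseteq> insert a \<sigma>"
    unfolding link_def mem_induced_ind_complex by auto
  have "{a, y} \<notin> F" if "y \<in> \<sigma>" for y
    using \<sigma>(3) that by (metis insert_mono empty_subsetI insert_subset)
  then have "\<sigma> \<inter> nbhd V F a = {}" unfolding nbhd_def by auto
  with \<sigma> show "\<sigma> \<in> induced_ind_complex F (S - insert a (nbhd V F a))"
    unfolding mem_induced_ind_complex by blast
next
  fix \<sigma> assume "\<sigma> \<in> induced_ind_complex F (S - insert a (nbhd V F a))"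
  then have \<sigma>: "\<sigma> \<subseteq> S" "a \<notin> \<sigma>" "\<forall>y\<in>\<sigma>. {a, y} \<notin> F" "\<forall>e\<in>F. \<not> e \<subseteq> \<sigma>"
    using \<open>S \<subseteq> V\<close> unfolding mem_induced_ind_complex nbhd_def by auto
  have "\<not> e \<subseteq> insert a \<sigma>" if "e \<in> F" for e
    using edge_subset_insertE[OF F \<open>e \<in> F\<close>] \<sigma>(3,4) \<open>e \<in> F\<close> by metis
  with \<sigma> \<open>a \<in> S\<close> show "\<sigma> \<in> link (induced_ind_complex F S) a"
    unfolding link_def mem_induced_ind_complex by blast
qed

lemma induced_ind_complex_cone:
  assumes F: "simple_graph V F" and S: "x \<in> S" "S \<subseteq> V" "nbhd V F x \<inter> S = {}"
    and \<sigma>: "\<sigma> \<in> induced_ind_complex F S"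
  shows "insert x \<sigma> \<in> induced_ind_complex F S"
proof -
  have "\<not> e \<subseteq> insert x \<sigma>" if "e \<in> F" for e
  proof
    assume "e \<subseteq> insert x \<sigma>"
    moreover have "\<not> e \<subseteq> \<sigma>" using \<sigma> \<open>e \<in> F\<close> unfolding mem_induced_ind_complex by blast
    ultimately obtain y where "y \<in> V" "y \<in> \<sigma>" "e = {x, y}"
      using edge_subset_insertE[OF F \<open>e \<in> F\<close>] by metis
    then have "y \<in> nbhd V F x \<inter> S"
      using \<sigma> \<open>e \<in> F\<close> unfolding mem_induced_ind_complex nbhd_def by blast
    then show False using S(3) by blast
  qed
  then show ?thesis using \<sigma> S(1) unfolding mem_induced_ind_complex by blast
qed

lemma not_in_closed_nbhd_edge:
  assumes "w \<in> V - closed_nbhd_edge V F u v"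
  shows "w \<noteq> u" "w \<noteq> v" "{w, u} \<notin> F" "{w, v} \<notin> F"
  using assms unfolding closed_nbhd_edge_def nbhd_def by (auto simp: insert_commute)

lemma homology_add_vertex:
  assumes V: "finite V" and F: "simple_graph V F" and S: "S \<subseteq> V" "w \<in> V" "w \<notin> S"
    and "reduced_homology_nonzero k V (induced_ind_complex F S) d"
  shows "reduced_homology_nonzero k V (induced_ind_complex F (insert w S)) d \<or>
    reduced_homology_nonzero k V (induced_ind_complex F (S - nbhd V F w)) d"
proof -
  have deletion: "deletion (induced_ind_complex F (insert w S)) w = induced_ind_complex F S"
    using S(3) by (simp add: deletion_induced_ind_complex)
  have link: "link (induced_ind_complex F (insert w S)) w = induced_ind_complex F (S - nbhd V F w)"
    using link_induced_ind_complex[OF F, of "insert w S" w] S by (simp add: insert_Diff_if)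
  have "insert w S \<subseteq> V" using S by simp
  from homology_deletion_imp_complex_or_link[OF V induced_ind_complex_subset_Pow[OF this]
      down_closed_induced_ind_complex assms(6)[folded deletion]]
  show ?thesis unfolding link .
qed

lemma homology_remove_vertex:
  assumes V: "finite V" and F: "simple_graph V F" and S: "S \<subseteq> V" "a \<in> S"
    and "reduced_homology_nonzero k V (induced_ind_complex F S) d"
  shows "reduced_homology_nonzero k V (induced_ind_complex F (S - {a})) d \<or>
    reduced_homology_nonzero k V (induced_ind_complex F (S - insert a (nbhd V F a))) (d - 1)"
proof -
  from homology_complex_imp_deletion_or_link[OF V induced_ind_complex_subset_Pow[OF S(1)]
      down_closed_induced_ind_complex assms(5), where a=a]
  show ?thesis unfolding deletion_induced_ind_complex link_induced_ind_complex[OF F S] .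
qed

lemma homology_isolated_edge_suspension:
  assumes V: "finite V" and F: "simple_graph V F" and L: "L \<subseteq> V" "w \<notin> L" "x \<notin> L"
    and wx: "{w, x} \<in> F" and isolated: "nbhd V F w \<inter> L = {}" "nbhd V F x \<inter> L = {}"
    and "reduced_homology_nonzero k V (induced_ind_complex F L) (d - 1)"
  shows "reduced_homology_nonzero k V (induced_ind_complex F (insert w (insert x L))) d"
proof -
  define T where "T = insert w (insert x L)"
  obtain "w \<noteq> x" "w \<in> V" "x \<in> V"
    using simple_graph_edgeE[OF F wx] by (metis doubleton_eq_iff)
  then have T: "T \<subseteq> V" "w \<in> T" "w \<in> V" unfolding T_def using L by auto
  have "x \<in> nbhd V F w" using wx \<open>x \<in> V\<close> unfolding nbhd_def by simp
  then have "T - insert w (nbhd V F w) = L"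
    unfolding T_def using isolated(1) L(2,3) by blast
  then have link: "link (induced_ind_complex F T) w = induced_ind_complex F L"
    using link_induced_ind_complex[OF F T(1,2)] by simp
  have "T - {w} = insert x L" unfolding T_def using L(2,3) \<open>w \<noteq> x\<close> by blast
  then have deletion: "deletion (induced_ind_complex F T) w = induced_ind_complex F (insert x L)"
    by (simp add: deletion_induced_ind_complex)
  have "{x, x} \<notin> F" using simple_graph_edgeE[OF F] by (metis insert_absorb2 doubleton_eq_iff)
  then have "nbhd V F x \<inter> insert x L = {}" using isolated(2) unfolding nbhd_def by blast
  \<comment> \<open>the deletion is a cone with apex x, so only the suspension of the link can carry homology\<close>
  then have "\<And>\<sigma>. \<sigma> \<in> induced_ind_complex F (insert x L) \<Longrightarrow>
      insert x \<sigma> \<in> induced_ind_complex F (insert x L)"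
    using induced_ind_complex_cone[OF F insertI1] L(1) \<open>x \<in> V\<close> by simp
  moreover have "induced_ind_complex F (insert x L) \<subseteq> Pow V"
    using L(1) \<open>x \<in> V\<close> by (simp add: induced_ind_complex_subset_Pow)
  ultimately have "\<not> reduced_homology_nonzero k V (induced_ind_complex F (insert x L)) (d - 1)"
    using cone_homology_vanishes[OF V _ \<open>x \<in> V\<close>] by blast
  moreover have "reduced_homology_nonzero k V (induced_ind_complex F T) (d - 1 + 1) \<or>
      reduced_homology_nonzero k V (induced_ind_complex F (insert x L)) (d - 1)"
    using homology_link_imp_complex_or_deletion[OF V induced_ind_complex_subset_Pow[OF T(1)] T(3)
        down_closed_induced_ind_complex assms(9)[folded link]]
    unfolding deletion .
  ultimately show ?thesis unfolding T_def by simp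
qed

section \<open>Deleting an edge next to an isolated vertex\<close>

lemma induced_ind_complex_cong:
  assumes "F - {e} = F' - {e}" "\<not> e \<subseteq> S"
  shows "induced_ind_complex F S = induced_ind_complex F' S"
proof (intro set_eqI)
  fix \<sigma>
  have drop_e: "(\<forall>e'\<in>G. \<not> e' \<subseteq> \<sigma>) \<longleftrightarrow> (\<forall>e'\<in>G - {e}. \<not> e' \<subseteq> \<sigma>)" if "\<sigma> \<subseteq> S" for G
    using assms(2) that by blast
  show "\<sigma> \<in> induced_ind_complex F S \<longleftrightarrow> \<sigma> \<in> induced_ind_complex F' S"
    unfolding mem_induced_ind_complex using drop_e[of F] drop_e[of F'] assms(1) by auto
qed

lemma insert_isolated_vertex_edge_deletion:
  assumes E: "simple_graph V E"
    and w: "w \<in> V - closed_nbhd_edge V E u v" "nbhd V E w \<subseteq> closed_nbhd_edge V E u v" "w \<in> S"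
    and \<sigma>: "\<sigma> \<in> induced_ind_complex (E - {{u, v}}) S" "u \<in> \<sigma>" "v \<in> \<sigma>"
  shows "insert w \<sigma> \<in> induced_ind_complex (E - {{u, v}}) S"
proof -
  have "\<not> e \<subseteq> insert w \<sigma>" if e: "e \<in> E - {{u, v}}" for e
  proof
    assume "e \<subseteq> insert w \<sigma>"
    moreover have "\<not> e \<subseteq> \<sigma>" using \<sigma>(1) e unfolding mem_induced_ind_complex by blast
    ultimately obtain y where y: "y \<in> V" "y \<in> \<sigma>" "e = {w, y}"
      using edge_subset_insertE[OF E] e by (metis DiffD1)
    then have "y \<in> nbhd V E w" using e unfolding nbhd_def by simp
    moreover have "y \<noteq> u" "y \<noteq> v" using not_in_closed_nbhd_edge[OF w(1)] y(3) e by auto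
    ultimately have "{u, y} \<in> E - {{u, v}} \<or> {v, y} \<in> E - {{u, v}}"
      using w(2) unfolding closed_nbhd_edge_def nbhd_def by (auto simp: doubleton_eq_iff)
    moreover have "{u, y} \<subseteq> \<sigma>" "{v, y} \<subseteq> \<sigma>" using \<sigma> y by auto
    ultimately show False using \<sigma>(1) unfolding mem_induced_ind_complex by blast
  qed
  then show ?thesis using \<sigma>(1) w(3) unfolding mem_induced_ind_complex by blast
qed

lemma homology_edge_deletion_isolated_vertex:
  assumes V: "finite V" and E: "simple_graph V E" and uv: "{u, v} \<in> E"
    and w: "w \<in> V - closed_nbhd_edge V E u v" "nbhd V E w \<subseteq> closed_nbhd_edge V E u v"
    and S: "S \<subseteq> V" "w \<in> S"
  shows "reduced_homology_nonzero k V (induced_ind_complex E S) d \<longleftrightarrow>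
    reduced_homology_nonzero k V (induced_ind_complex (E - {{u, v}}) S) d"
proof (rule homology_cone_extension_iff[OF V(1) _ _ _ down_closed_induced_ind_complex])
  let ?K = "induced_ind_complex E S" and ?K' = "induced_ind_complex (E - {{u, v}}) S"
  show "?K' \<subseteq> Pow V" using induced_ind_complex_subset_Pow[OF S(1)] .
  show "w \<in> V" using w(1) by blast
  show "?K \<subseteq> ?K'" by (auto simp: mem_induced_ind_complex)
  have new: "u \<in> \<sigma> \<and> v \<in> \<sigma>" if "\<sigma> \<in> ?K' - ?K" for \<sigma>
    using that by (auto simp: mem_induced_ind_complex)
  show cone_new: "insert w \<sigma> \<in> ?K'" if "\<sigma> \<in> ?K' - ?K" for \<sigma>
    using insert_isolated_vertex_edge_deletion[OF E w S(2)] new[OF that] that by blast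
  show "insert w \<tau> \<in> ?K" if "\<tau> \<in> ?K" "\<sigma> \<in> ?K' - ?K" "\<tau> \<subseteq> \<sigma>" for \<tau> \<sigma>
  proof -
    have "\<not> {u, v} \<subseteq> insert w \<tau>"
      using that(1) uv not_in_closed_nbhd_edge[OF w(1)] unfolding mem_induced_ind_complex by auto
    moreover have "insert w \<tau> \<subseteq> insert w \<sigma>" using that(3) by blast
    ultimately show ?thesis
      using cone_new[OF that(2)] that(1) unfolding mem_induced_ind_complex by blast
  qed
qed

lemma neighbour_of_isolated_vertexE:
  assumes E: "simple_graph V E"
    and w: "w \<in> V - closed_nbhd_edge V E u v" "nbhd V E w \<subseteq> closed_nbhd_edge V E u v"
    and x: "x \<in> nbhd V E w" "degree V E x = 2"
  obtains a where "a \<in> {u, v}" "nbhd V E x = {a, w}"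
proof -
  have "x \<noteq> u" "x \<noteq> v" using x(1) not_in_closed_nbhd_edge[OF w(1)] unfolding nbhd_def by auto
  then obtain a where a: "a \<in> {u, v}" "{a, x} \<in> E"
    using w(2) x(1) unfolding closed_nbhd_edge_def nbhd_def by auto
  then have "a \<in> V"
    using simple_graph_edgeE[OF E a(2)] by (metis insertI1 insert_iff doubleton_eq_iff)
  then have "{a, w} \<subseteq> nbhd V E x"
    using a x(1) w(1) unfolding nbhd_def by (auto simp: insert_commute)
  moreover have "finite (nbhd V E x)" using E unfolding simple_graph_def nbhd_def by simp
  moreover have "card {a, w} = 2" using a not_in_closed_nbhd_edge[OF w(1)] by auto
  ultimately have "nbhd V E x = {a, w}" using x(2) unfolding degree_def by (metis card_subset_eq)
  with a show ?thesis using that by blast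
qed

lemma reg_eqI:
  fixes V :: "'a::linorder set"
  assumes V: "finite V"
    and F_F': "\<And>S d. S \<subseteq> V \<Longrightarrow>
      reduced_homology_nonzero TYPE('k::field) V (induced_ind_complex F S) d \<Longrightarrow>
      \<exists>T\<subseteq>V. reduced_homology_nonzero TYPE('k) V (induced_ind_complex F' T) d"
    and F'_F: "\<And>S d. S \<subseteq> V \<Longrightarrow>
      reduced_homology_nonzero TYPE('k) V (induced_ind_complex F' S) d \<Longrightarrow>
      \<exists>T\<subseteq>V. reduced_homology_nonzero TYPE('k) V (induced_ind_complex F T) d"
  shows "reg TYPE('k) V F = reg TYPE('k) V F'"
proof -
  have ambient: "reduced_homology_nonzero TYPE('k) S (induced_ind_complex G S) d \<longleftrightarrow>
      reduced_homology_nonzero TYPE('k) V (induced_ind_complex G S) d" if "S \<subseteq> V" for G S d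
    using reduced_homology_nonzero_ambient_cong[OF induced_ind_complex_subset_Pow[OF order_refl]
      that V] .
  have "(\<exists>S\<subseteq>V. reduced_homology_nonzero TYPE('k) S (induced_ind_complex F S) d) \<longleftrightarrow>
      (\<exists>S\<subseteq>V. reduced_homology_nonzero TYPE('k) S (induced_ind_complex F' S) d)" for d
    using F_F' F'_F ambient by meson
  then show ?thesis unfolding reg_def induced_ind_complex_def by simp
qed

lemma homology_transfer_edge_deletion:
  fixes V :: "'a::linorder set"
  assumes V: "finite V" and F: "simple_graph V F" and F_F': "F - {{u, v}} = F' - {{u, v}}"
    and w: "w \<in> V - closed_nbhd_edge V F u v"
    and x: "x \<in> nbhd V F w" "nbhd V F x \<subseteq> {a, w}" "a \<in> {u, v}"
    and full: "\<And>S. S \<subseteq> V \<Longrightarrow> {u, v, w} \<subseteq> S \<Longrightarrow>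
      reduced_homology_nonzero k V (induced_ind_complex F S) d \<Longrightarrow>
      reduced_homology_nonzero k V (induced_ind_complex F' S) d"
    and S: "S \<subseteq> V" "reduced_homology_nonzero k V (induced_ind_complex F S) d"
  shows "\<exists>T\<subseteq>V. reduced_homology_nonzero k V (induced_ind_complex F' T) d"
proof -
  note w_facts = not_in_closed_nbhd_edge[OF w]
  have partial: "\<exists>T\<subseteq>V. reduced_homology_nonzero k V (induced_ind_complex F' T) d"
    if "T \<subseteq> V" "\<not> {u, v} \<subseteq> T" "reduced_homology_nonzero k V (induced_ind_complex F T) d" for T
    using that induced_ind_complex_cong[OF F_F', of T] by auto
  consider "\<not> {u, v} \<subseteq> S" | "{u, v, w} \<subseteq> S" | "{u, v} \<subseteq> S" "w \<notin> S"
    by blast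
  then show ?thesis
  proof cases
    case 1
    then show ?thesis using partial S by blast
  next
    case 2
    then show ?thesis using full S by blast
  next
    case 3
    define S' where "S' = S - nbhd V F w"
    have "reduced_homology_nonzero k V (induced_ind_complex F (insert w S)) d \<or>
        reduced_homology_nonzero k V (induced_ind_complex F S') d"
      using homology_add_vertex[OF V F S(1) _ 3(2) S(2)] w unfolding S'_def by blast
    moreover have "reduced_homology_nonzero k V (induced_ind_complex F' (insert w S)) d"
      if "reduced_homology_nonzero k V (induced_ind_complex F (insert w S)) d"
      using full[OF _ _ that] S(1) w 3(1) by blast
    moreover have "\<exists>T\<subseteq>V. reduced_homology_nonzero k V (induced_ind_complex F' T) d"
      if S': "reduced_homology_nonzero k V (induced_ind_complex F S') d"
    proof -
      have "S' \<subseteq> V" "a \<in> S'" "x \<notin> S'"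
        using S(1) 3(1) x w_facts unfolding S'_def nbhd_def by (auto simp: insert_commute)
      define L where "L = S' - insert a (nbhd V F a)"
      have "reduced_homology_nonzero k V (induced_ind_complex F (S' - {a})) d \<or>
          reduced_homology_nonzero k V (induced_ind_complex F L) (d - 1)"
        using homology_remove_vertex[OF V F \<open>S' \<subseteq> V\<close> \<open>a \<in> S'\<close> S'] unfolding L_def .
      moreover have "reduced_homology_nonzero k V (induced_ind_complex F (insert w (insert x L))) d"
        if "reduced_homology_nonzero k V (induced_ind_complex F L) (d - 1)"
      proof (rule homology_isolated_edge_suspension[OF V F _ _ _ _ _ _ that])
        show "L \<subseteq> V" "w \<notin> L" "x \<notin> L" "nbhd V F w \<inter> L = {}" "nbhd V F x \<inter> L = {}"
          using \<open>S' \<subseteq> V\<close> \<open>x \<notin> S'\<close> 3(2) x(2) unfolding L_def S'_def by auto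
        show "{w, x} \<in> F" using x(1) unfolding nbhd_def by simp
      qed
      moreover have "a \<noteq> w" "a \<noteq> x" using w_facts x(1,3) unfolding nbhd_def by auto
      then have "\<not> {u, v} \<subseteq> S' - {a}" "\<not> {u, v} \<subseteq> insert w (insert x L)"
        using x(3) unfolding L_def by auto
      moreover have "S' - {a} \<subseteq> V" "insert w (insert x L) \<subseteq> V"
        using w x(1) \<open>S' \<subseteq> V\<close> unfolding L_def nbhd_def by auto
      ultimately show ?thesis using partial by blast
    qed
    ultimately show ?thesis using S(1) w by blast
  qed
qed

theorem mainTheorem13:
  fixes V :: "'a::linorder set" and E :: "'a set set" and u v w x :: 'a
  assumes "simple_graph V E"
    and "{u, v} \<in> E"
    and "w \<in> V - closed_nbhd_edge V E u v"
    and "\<forall>y \<in> V - closed_nbhd_edge V E u v. {w, y} \<notin> E"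
    and "x \<in> nbhd V E w"
    and "degree V E x = 2"
  shows "reg TYPE('k::field) V E = reg TYPE('k) V (E - {{u, v}})"
proof -
  let ?E' = "E - {{u, v}}"
  have V: "finite V" and E': "simple_graph V ?E'"
    using assms(1) unfolding simple_graph_def by auto
  have isolated: "nbhd V E w \<subseteq> closed_nbhd_edge V E u v"
    using assms(4) unfolding nbhd_def by (auto simp: insert_commute)
  obtain a where a: "a \<in> {u, v}" "nbhd V E x = {a, w}"
    using neighbour_of_isolated_vertexE[OF assms(1,3) isolated assms(5,6)] by blast
  have w': "w \<in> V - closed_nbhd_edge V ?E' u v"
    and x': "x \<in> nbhd V ?E' w" "nbhd V ?E' x \<subseteq> {a, w}"
    using assms(3,5) a(2) not_in_closed_nbhd_edge[OF assms(3)]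
    unfolding closed_nbhd_edge_def nbhd_def by auto
  have same: "reduced_homology_nonzero TYPE('k) V (induced_ind_complex E S) d \<longleftrightarrow>
      reduced_homology_nonzero TYPE('k) V (induced_ind_complex ?E' S) d"
    if "S \<subseteq> V" "{u, v, w} \<subseteq> S" for S d
    using homology_edge_deletion_isolated_vertex[OF V assms(1,2,3) isolated] that by blast
  have "nbhd V E x \<subseteq> {a, w}" "E - {{u, v}} = ?E' - {{u, v}}" "?E' - {{u, v}} = E - {{u, v}}"
    using a(2) by auto
  show ?thesis
  proof (rule reg_eqI[OF V])
    show "\<exists>T\<subseteq>V. reduced_homology_nonzero TYPE('k) V (induced_ind_complex ?E' T) d"
      if "S \<subseteq> V" "reduced_homology_nonzero TYPE('k) V (induced_ind_complex E S) d" for S d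
      by (rule homology_transfer_edge_deletion[OF V assms(1) \<open>E - {{u, v}} = ?E' - {{u, v}}\<close>
          assms(3,5) \<open>nbhd V E x \<subseteq> {a, w}\<close> a(1) _ that]) (use same in blast)
    show "\<exists>T\<subseteq>V. reduced_homology_nonzero TYPE('k) V (induced_ind_complex E T) d"
      if "S \<subseteq> V" "reduced_homology_nonzero TYPE('k) V (induced_ind_complex ?E' S) d" for S d
      by (rule homology_transfer_edge_deletion[OF V E' \<open>?E' - {{u, v}} = E - {{u, v}}\<close>
          w' x' a(1) _ that]) (use same in blast)
  qed
qed

end
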